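(* With $f$ as in the context (and $n\ge 3$), $U=\{x\in V : xf\in v_0\wedge V\}$, and every $g\in G$ satisfies $Ug=U$.
   Context: Let $p$ be a prime, $\mathbb{F}=\mathrm{GF}(p)$, and $n\ge 3$. Let $V$ be an $\mathbb{F}$-vector space with basis $v_0,\dots,v_n$, $U=\langle v_1,\dots,v_n\rangle$, $W=\Lambda^2V$, and $v_0\wedge V=\{v_0\wedge y:y\in V\}$. Maps are written on the right. For $g\in\mathrm{End}(V)$, $\widehat g$ denotes the induced linear map of $W$, $(x\wedge y)\widehat g=(xg)\wedge(yg)$. The linear map $f:V\to W$ is given by $v_0f=\sum_{i=1}^n b_i\, v_0\wedge v_i+\sum_{1\le j<k\le n}c_{j,k}\, v_j\wedge v_k$ and $v_if=\sum_{j=1}^n A_{i,j}\, v_0\wedge v_j$ for $1\le i\le n$, where $b\in\mathbb{F}^n$ and $c=(c_{j,k})\in\mathbb{F}^{\binom n2}$ are nonzero, and $A$ is the $n\times n$ companion matrix of the minimal polynomial over $\mathbb{F}$ of a primitive element of $\mathrm{GF}(p^n)$. Let $G=\{g\in \mathrm{GL}(V) : (vg)f=(vf)\widehat{g}\ \text{for all } v\in V\}$. *)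

theory Defs
  imports "HOL-Computational_Algebra.Polynomial" "HOL-Library.Function_Algebras"
begin

(* Coordinates: V = F^{n+1} with basis v_0..v_n, vectors are functions nat => 'a
   vanishing outside {0..n}.  W = Lambda^2 V is represented in the basis
   v_j /\ v_k (j < k <= n): an element is a function nat => nat => 'a giving its
   coordinate at (j,k) (zero outside 0 <= j < k <= n).  Maps act on the right,
   matrices are nat => nat => 'a, and x g has coordinates sum_i x_i g_{i,j}. *)

definition vecs :: "nat \<Rightarrow> (nat \<Rightarrow> 'a::zero) set" where
  "vecs n = {x. \<forall>i>n. x i = 0}"

definition basis_vec :: "nat \<Rightarrow> nat \<Rightarrow> 'a::{zero,one}" where
  "basis_vec i = (\<lambda>j. if j = i then 1 else 0)"

definition Usp :: "nat \<Rightarrow> (nat \<Rightarrow> 'a::zero) set" where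
  "Usp n = {x \<in> vecs n. x 0 = 0}"

definition wedge :: "nat \<Rightarrow> (nat \<Rightarrow> 'a::comm_ring) \<Rightarrow> (nat \<Rightarrow> 'a) \<Rightarrow> nat \<Rightarrow> nat \<Rightarrow> 'a" where
  "wedge n x y = (\<lambda>j k. if j < k \<and> k \<le> n then x j * y k - x k * y j else 0)"

definition scaleW :: "'a::times \<Rightarrow> (nat \<Rightarrow> nat \<Rightarrow> 'a) \<Rightarrow> nat \<Rightarrow> nat \<Rightarrow> 'a" where
  "scaleW a w = (\<lambda>j k. a * w j k)"

definition v0_wedge_V :: "nat \<Rightarrow> (nat \<Rightarrow> nat \<Rightarrow> 'a::comm_ring_1) set" where
  "v0_wedge_V n = {wedge n (basis_vec 0) y | y. y \<in> vecs n}"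

definition is_endo :: "nat \<Rightarrow> (nat \<Rightarrow> nat \<Rightarrow> 'a::zero) \<Rightarrow> bool" where
  "is_endo n g \<longleftrightarrow> (\<forall>i j. (n < i \<or> n < j) \<longrightarrow> g i j = 0)"

definition vmat :: "nat \<Rightarrow> (nat \<Rightarrow> 'a::comm_ring) \<Rightarrow> (nat \<Rightarrow> nat \<Rightarrow> 'a) \<Rightarrow> nat \<Rightarrow> 'a" where
  "vmat n x g = (\<lambda>j. if j \<le> n then (\<Sum>i\<le>n. x i * g i j) else 0)"

definition is_GL :: "nat \<Rightarrow> (nat \<Rightarrow> nat \<Rightarrow> 'a::comm_ring_1) \<Rightarrow> bool" where
  "is_GL n g \<longleftrightarrow> is_endo n g \<and>
     (\<exists>h. is_endo n h \<and> (\<forall>i\<le>n. \<forall>j\<le>n. (\<Sum>l\<le>n. g i l * h l j) = (if i = j then 1 else 0)))"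

definition hat :: "nat \<Rightarrow> (nat \<Rightarrow> nat \<Rightarrow> 'a::comm_ring) \<Rightarrow> (nat \<Rightarrow> nat \<Rightarrow> 'a) \<Rightarrow> nat \<Rightarrow> nat \<Rightarrow> 'a" where
  "hat n g w = (\<Sum>j\<le>n. \<Sum>k\<in>{j<..n}. scaleW (w j k) (wedge n (\<lambda>i. g j i) (\<lambda>i. g k i)))"

definition fmap :: "nat \<Rightarrow> (nat \<Rightarrow> 'a::comm_ring_1) \<Rightarrow> (nat \<Rightarrow> nat \<Rightarrow> 'a) \<Rightarrow> (nat \<Rightarrow> nat \<Rightarrow> 'a)
     \<Rightarrow> (nat \<Rightarrow> 'a) \<Rightarrow> nat \<Rightarrow> nat \<Rightarrow> 'a" where
  "fmap n b c A x =
     scaleW (x 0) ((\<Sum>i\<in>{1..n}. scaleW (b i) (wedge n (basis_vec 0) (basis_vec i)))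
        + (\<Sum>j\<in>{1..n}. \<Sum>k\<in>{j<..n}. scaleW (c j k) (wedge n (basis_vec j) (basis_vec k))))
   + (\<Sum>i\<in>{1..n}. scaleW (x i) (\<Sum>j\<in>{1..n}. scaleW (A i j) (wedge n (basis_vec 0) (basis_vec j))))"

definition Ggrp :: "nat \<Rightarrow> (nat \<Rightarrow> 'a::comm_ring_1) \<Rightarrow> (nat \<Rightarrow> nat \<Rightarrow> 'a) \<Rightarrow> (nat \<Rightarrow> nat \<Rightarrow> 'a)
     \<Rightarrow> (nat \<Rightarrow> nat \<Rightarrow> 'a) set" where
  "Ggrp n b c A = {g. is_GL n g \<and>
     (\<forall>v\<in>vecs n. fmap n b c A (vmat n v g) = hat n g (fmap n b c A v))}"

text \<open>Companion matrix (indices 1..n) of a monic q = x^n + a_{n-1} x^{n-1} + ... + a_0,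
  for the right action on row vectors: v_i A = v_{i+1} (i < n),
  v_n A = - sum_j a_{j-1} v_j.\<close>
definition companion :: "nat \<Rightarrow> 'a::comm_ring_1 poly \<Rightarrow> nat \<Rightarrow> nat \<Rightarrow> 'a" where
  "companion n q = (\<lambda>i j. if 1 \<le> i \<and> i \<le> n \<and> 1 \<le> j \<and> j \<le> n then
       (if i < n then (if j = i + 1 then 1 else 0) else - coeff q (j - 1)) else 0)"

definition is_ring_hom :: "('a::ring_1 \<Rightarrow> 'b::ring_1) \<Rightarrow> bool" where
  "is_ring_hom \<phi> \<longleftrightarrow> \<phi> 1 = 1 \<and> (\<forall>x y. \<phi> (x + y) = \<phi> x + \<phi> y) \<and> (\<forall>x y. \<phi> (x * y) = \<phi> x * \<phi> y)"

definition is_min_poly :: "('a::field \<Rightarrow> 'b::field) \<Rightarrow> 'b \<Rightarrow> 'a poly \<Rightarrow> bool" where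
  "is_min_poly \<phi> \<alpha> q \<longleftrightarrow> lead_coeff q = 1 \<and> poly (map_poly \<phi> q) \<alpha> = 0 \<and>
     (\<forall>r. r \<noteq> 0 \<and> poly (map_poly \<phi> r) \<alpha> = 0 \<longrightarrow> degree q \<le> degree r)"

definition is_primitive_elem :: "'b::field \<Rightarrow> bool" where
  "is_primitive_elem \<alpha> \<longleftrightarrow> \<alpha> \<noteq> 0 \<and> (\<forall>y. y \<noteq> 0 \<longrightarrow> (\<exists>k::nat. y = \<alpha> ^ k))"

end

theory Submission
  imports Defs "Jordan_Normal_Form.Determinant"
begin

(* In the basis v_j /\ v_k of W = Lambda^2 V, the U-part (1 <= j < k <= n) of
   xf is x_0 * c, while the v_0 /\ V part collects everything else.  Since c is nonzero,
   xf lies in v_0 /\ V exactly when x_0 = 0, i.e. when x lies in U; this is the first claim.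

   For the second claim let g be in G and write u for the U-projection of v_0 g.  Evaluating
   (v_i g) f = (v_i f) g^ on the U-part of W for i >= 1 gives
       g_{i0} c = sum_m A_{im} (u /\ w_m),      w_m = U-projection of v_m g.
   As the companion matrix A is invertible (its minimal polynomial has nonzero constant
   term, alpha being nonzero), every u /\ w_m is a multiple of c.  The w_m span U because
   g is invertible, so u /\ U lies on the line F c; for n >= 3 this forces u = 0.  Then the
   right hand side vanishes, so g_{i0} = 0 for all i >= 1.  Thus the v_0-coordinate of xg
   is x_0 g_{00} with g_{00} \<noteq> 0, and g maps U onto U. *)

section \<open>Coordinates of f and of v_0 /\ V\<close>

lemma sum_fun_apply: "(\<Sum>i\<in>S. F i) x = (\<Sum>i\<in>S. F i x)"
  by (induct S rule: infinite_finite_induct) auto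

lemma fmap_outside:
  assumes "\<not> (j < k \<and> k \<le> n)"
  shows "fmap n b c A x j k = (0::'a::comm_ring_1)"
proof -
  have outside: "(j < k \<and> k \<le> n) = False" using assms by simp
  show ?thesis by (simp add: fmap_def sum_fun_apply scaleW_def wedge_def outside)
qed

lemma fmap_U_coord:
  fixes x :: "nat \<Rightarrow> 'a::comm_ring_1"
  assumes jk: "1 \<le> j" "j < k" "k \<le> n"
  shows "fmap n b c A x j k = x 0 * c j k"
proof -
  have inner: "(\<Sum>k'\<in>{j'<..n}. c j' k' * wedge n (basis_vec j') (basis_vec k') j k)
      = (if j' = j then c j k else 0)" for j'
  proof -
    have "(\<Sum>k'\<in>{j'<..n}. c j' k' * wedge n (basis_vec j') (basis_vec k') j k)
       = (\<Sum>k'\<in>{j'<..n}. if j' = j \<and> k' = k then c j k else 0)"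
      using jk by (intro sum.cong) (auto simp: wedge_def basis_vec_def)
    then show ?thesis using jk by (simp add: sum.delta)
  qed
  have c_part: "(\<Sum>j\<in>{1..n}. \<Sum>k\<in>{j<..n}. scaleW (c j k) (wedge n (basis_vec j) (basis_vec k))) j k
      = c j k"
    using jk by (simp add: sum_fun_apply scaleW_def inner sum.delta)
  have b_part: "(\<Sum>i\<in>{1..n}. scaleW (b i) (wedge n (basis_vec 0) (basis_vec i))) j k = 0"
    and A_part: "(\<Sum>i\<in>{1..n}. scaleW (x i)
        (\<Sum>j\<in>{1..n}. scaleW (A i j) (wedge n (basis_vec 0) (basis_vec j)))) j k = 0"
    using jk by (simp_all add: sum_fun_apply scaleW_def wedge_def basis_vec_def)
  show ?thesis
    unfolding fmap_def using b_part c_part A_part by (simp add: scaleW_def)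
qed

lemma fmap_v0_coord:
  fixes x :: "nat \<Rightarrow> 'a::comm_ring_1"
  assumes k: "1 \<le> k" "k \<le> n"
  shows "fmap n b c A x 0 k = x 0 * b k + (\<Sum>i\<in>{1..n}. x i * A i k)"
proof -
  have delta: "(\<Sum>j\<in>{1..n}. a j * wedge n (basis_vec 0) (basis_vec j) 0 k) = a k"
    for a :: "nat \<Rightarrow> 'a"
  proof -
    have "(\<Sum>j\<in>{1..n}. a j * wedge n (basis_vec 0) (basis_vec j) 0 k)
        = (\<Sum>j\<in>{1..n}. if j = k then a k else 0)"
      using k by (intro sum.cong) (auto simp: wedge_def basis_vec_def)
    then show ?thesis using k by (simp add: sum.delta')
  qed
  have no_c: "(\<Sum>j\<in>{1..n}. \<Sum>k\<in>{j<..n}. scaleW (c j k) (wedge n (basis_vec j) (basis_vec k))) 0 k = 0"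
    by (auto simp: sum_fun_apply scaleW_def wedge_def basis_vec_def intro!: sum.neutral)
  have b_part: "(\<Sum>i\<in>{1..n}. scaleW (b i) (wedge n (basis_vec 0) (basis_vec i))) 0 k = b k"
    unfolding sum_fun_apply scaleW_def by (rule delta)
  have A_part: "(\<Sum>i\<in>{1..n}. scaleW (x i)
      (\<Sum>j\<in>{1..n}. scaleW (A i j) (wedge n (basis_vec 0) (basis_vec j)))) 0 k
      = (\<Sum>i\<in>{1..n}. x i * A i k)"
    unfolding sum_fun_apply scaleW_def delta ..
  show ?thesis
    unfolding fmap_def using b_part no_c A_part by (simp add: scaleW_def)
qed

lemma in_v0_wedge_V_iff:
  fixes w :: "nat \<Rightarrow> nat \<Rightarrow> 'a::comm_ring_1"
  assumes supp: "\<And>j k. \<not> (j < k \<and> k \<le> n) \<Longrightarrow> w j k = 0"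
  shows "w \<in> v0_wedge_V n \<longleftrightarrow> (\<forall>j k. 1 \<le> j \<and> j < k \<and> k \<le> n \<longrightarrow> w j k = 0)"
proof
  assume "w \<in> v0_wedge_V n"
  then obtain y where "w = wedge n (basis_vec 0) y" unfolding v0_wedge_V_def by auto
  then show "\<forall>j k. 1 \<le> j \<and> j < k \<and> k \<le> n \<longrightarrow> w j k = 0"
    by (auto simp: wedge_def basis_vec_def)
next
  assume U_part: "\<forall>j k. 1 \<le> j \<and> j < k \<and> k \<le> n \<longrightarrow> w j k = 0"
  define y where "y = (\<lambda>k. if 0 < k \<and> k \<le> n then w 0 k else (0::'a))"
  have "w = wedge n (basis_vec 0) y"
  proof (intro ext)
    fix j k
    show "w j k = wedge n (basis_vec 0) y j k"
      using U_part supp[of j k]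
      by (cases "j = 0") (auto simp: wedge_def basis_vec_def y_def)
  qed
  moreover have "y \<in> vecs n" by (simp add: y_def vecs_def)
  ultimately show "w \<in> v0_wedge_V n" unfolding v0_wedge_V_def by auto
qed

lemma fmap_in_v0_wedge_V_iff:
  fixes x :: "nat \<Rightarrow> 'a::idom"
  assumes "1 \<le> j0" "j0 < k0" "k0 \<le> n" "c j0 k0 \<noteq> 0"
  shows "fmap n b c A x \<in> v0_wedge_V n \<longleftrightarrow> x 0 = 0"
proof -
  have "fmap n b c A x \<in> v0_wedge_V n \<longleftrightarrow>
      (\<forall>j k. 1 \<le> j \<and> j < k \<and> k \<le> n \<longrightarrow> x 0 * c j k = 0)"
    by (auto simp: in_v0_wedge_V_iff fmap_outside fmap_U_coord)
  also have "\<dots> \<longleftrightarrow> x 0 = 0" using assms by auto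
  finally show ?thesis .
qed

section \<open>Linear algebra\<close>

lemma right_inverse_imp_left_inverse:
  fixes g h :: "nat \<Rightarrow> nat \<Rightarrow> 'a::field"
  assumes "\<forall>i\<le>n. \<forall>j\<le>n. (\<Sum>l\<le>n. g i l * h l j) = (if i = j then 1 else 0)"
  shows "\<forall>i\<le>n. \<forall>j\<le>n. (\<Sum>l\<le>n. h i l * g l j) = (if i = j then 1 else 0)"
proof -
  define G where "G = mat (Suc n) (Suc n) (\<lambda>(i,j). g i j)"
  define H where "H = mat (Suc n) (Suc n) (\<lambda>(i,j). h i j)"
  have prod: "(mat (Suc n) (Suc n) (\<lambda>(i,j). P i j) * mat (Suc n) (Suc n) (\<lambda>(i,j). R i j)) $$ (i,j)
       = (\<Sum>l\<le>n. P i l * R l j)" if "i < Suc n" "j < Suc n" for P R :: "nat \<Rightarrow> nat \<Rightarrow> 'a" and i j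
    using that by (simp add: scalar_prod_def atLeast0LessThan lessThan_Suc_atMost)
  have "G * H = 1\<^sub>m (Suc n)"
  proof (rule eq_matI)
    fix i j assume "i < dim_row (1\<^sub>m (Suc n) :: 'a mat)" "j < dim_col (1\<^sub>m (Suc n) :: 'a mat)"
    then show "(G * H) $$ (i, j) = 1\<^sub>m (Suc n) $$ (i, j)"
      unfolding G_def H_def using prod assms by auto
  qed (auto simp: G_def H_def)
  then have "H * G = 1\<^sub>m (Suc n)"
    by (rule mat_mult_left_right_inverse[rotated 2]) (auto simp: G_def H_def)
  then show ?thesis
    by (metis (no_types, lifting) H_def G_def prod index_one_mat(1) le_imp_less_Suc)
qed

(* The wedge-with-a-line lemma: if u /\ v_p lies on a fixed line F c for every basis vector
   v_p of U = F^n with n >= 3, then u = 0, since otherwise u /\ U has dimension n - 1 >= 2. *)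
lemma wedge_into_line_vanishes:
  fixes u s :: "nat \<Rightarrow> 'a::idom" and c :: "nat \<Rightarrow> nat \<Rightarrow> 'a"
  assumes n3: "n \<ge> 3"
    and line: "\<And>p j k. 1 \<le> p \<Longrightarrow> p \<le> n \<Longrightarrow> 1 \<le> j \<Longrightarrow> j < k \<Longrightarrow> k \<le> n \<Longrightarrow>
           u j * (if p = k then 1 else 0) - u k * (if p = j then 1 else 0) = s p * c j k"
    and m: "1 \<le> m" "m \<le> n"
  shows "u m = 0"
proof (rule ccontr)
  assume um: "u m \<noteq> 0"
  (* For p \<noteq> m the coordinate of u /\ v_p at the pair {m, p} is \<plusminus>u_m. *)
  have pair: "s p \<noteq> 0 \<and> c (min m p) (max m p) \<noteq> 0" if p: "1 \<le> p" "p \<le> n" "p \<noteq> m" for p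
  proof (cases "m < p")
    case True
    with line[OF p(1,2) m(1) True p(2)] um show ?thesis by auto
  next
    case False
    with p have "p < m" by auto
    with line[OF p(1,2) p(1) this m(2)] um show ?thesis by auto
  qed
  (* For a third index p' the same coordinate of u /\ v_p' is zero. *)
  have zero: "s p' = 0" if p: "1 \<le> p" "p \<le> n" "p \<noteq> m"
      and p': "1 \<le> p'" "p' \<le> n" "p' \<noteq> m" "p' \<noteq> p" for p p'
  proof -
    have "1 \<le> min m p" "min m p < max m p" "max m p \<le> n" using p m by auto
    from line[OF p'(1,2) this] have "s p' * c (min m p) (max m p) = 0"
      using p p' by (auto simp: min_def max_def)
    then show ?thesis using pair[OF p] by simp
  qed
  obtain p p' where "p \<in> {1,2,3}" "p' \<in> {1,2,3}" "p \<noteq> m" "p' \<noteq> m" "p' \<noteq> p"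
  proof (cases "m = 1")
    case True then show ?thesis using that[of 2 3] by auto
  next
    case False then show ?thesis using that[of 1 "if m = 2 then 3 else 2"] by auto
  qed
  then have "1 \<le> p" "p \<le> n" "1 \<le> p'" "p' \<le> n" "p \<noteq> m" "p' \<noteq> m" "p' \<noteq> p"
    using n3 by auto
  then show False using zero pair by blast
qed

(* The companion matrix of q is invertible when q(0) \<noteq> 0: if its rows, applied to a family
   W_1, ..., W_n of elements of Lambda^2 U, all land on a line F c, then every W_m lies on
   that line.  Row i < n picks out W_{i+1}; row n recovers W_1 using the constant term of q. *)
lemma companion_preimage_of_line:
  fixes W :: "nat \<Rightarrow> nat \<Rightarrow> nat \<Rightarrow> 'a::field" and c :: "nat \<Rightarrow> nat \<Rightarrow> 'a"
    and \<beta> :: "nat \<Rightarrow> 'a"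
  assumes q0: "coeff q 0 \<noteq> 0"
    and rows: "\<And>i j k. 1 \<le> i \<Longrightarrow> i \<le> n \<Longrightarrow> 1 \<le> j \<Longrightarrow> j < k \<Longrightarrow> k \<le> n \<Longrightarrow>
           \<beta> i * c j k = (\<Sum>m\<in>{1..n}. companion n q i m * W m j k)"
    and m: "1 \<le> m" "m \<le> n"
  shows "\<exists>t. \<forall>j k. 1 \<le> j \<and> j < k \<and> k \<le> n \<longrightarrow> W m j k = t * c j k"
proof -
  have shift_row: "\<beta> i * c j k = W (i + 1) j k"
    if "1 \<le> i" "i < n" "1 \<le> j" "j < k" "k \<le> n" for i j k
  proof -
    have "(\<Sum>m\<in>{1..n}. companion n q i m * W m j k)
        = (\<Sum>m\<in>{1..n}. if m = i + 1 then W (i + 1) j k else 0)"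
      using that by (intro sum.cong) (auto simp: companion_def)
    then show ?thesis using rows[of i j k] that by (simp add: sum.delta')
  qed
  show ?thesis
  proof (cases "m = 1")
    case False
    then show ?thesis using m shift_row[of "m - 1"] by (intro exI[of _ "\<beta> (m - 1)"]) auto
  next
    case True
    define S where "S = (\<Sum>m\<in>{2..n}. coeff q (m - 1) * \<beta> (m - 1))"
    show ?thesis
    proof (intro exI[of _ "- (\<beta> n + S) / coeff q 0"] allI impI)
      fix j k assume jk: "1 \<le> j \<and> j < k \<and> k \<le> n"
      have "\<beta> n * c j k = (\<Sum>m\<in>{1..n}. - coeff q (m - 1) * W m j k)"
        using rows[of n j k] jk by (auto intro!: sum.cong simp: companion_def)
      also have "\<dots> = - coeff q 0 * W 1 j k + (\<Sum>m\<in>{2..n}. - coeff q (m - 1) * W m j k)"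
        using jk by (subst sum.atLeast_Suc_atMost) (auto simp: numeral_2_eq_2)
      also have "(\<Sum>m\<in>{2..n}. - coeff q (m - 1) * W m j k) = - S * c j k"
        unfolding S_def sum_distrib_right sum_negf[symmetric]
        using shift_row jk by (intro sum.cong refl) (auto simp: mult.assoc)
      finally have "coeff q 0 * W 1 j k = - (\<beta> n + S) * c j k"
        by (simp add: algebra_simps)
      then show "W m j k = - (\<beta> n + S) / coeff q 0 * c j k"
        using q0 True by (simp add: field_simps)
    qed
  qed
qed

(* The minimal polynomial of a nonzero element has nonzero constant term:
   otherwise q = x r and r would be a smaller annihilating polynomial. *)
lemma min_poly_coeff_0_nonzero:
  fixes \<phi> :: "'a::field \<Rightarrow> 'b::field"
  assumes hom: "is_ring_hom \<phi>" and "\<alpha> \<noteq> 0" and min: "is_min_poly \<phi> \<alpha> q"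
  shows "coeff q 0 \<noteq> 0"
proof
  assume q0: "coeff q 0 = 0"
  have phi0: "\<phi> 0 = 0"
    using hom unfolding is_ring_hom_def by (metis add_0 add_cancel_left_right)
  obtain r where qr: "q = pCons 0 r" using q0 by (cases q) auto
  have "r \<noteq> 0" using min qr unfolding is_min_poly_def by auto
  moreover have "poly (map_poly \<phi> r) \<alpha> = 0"
    using min qr phi0 \<open>\<alpha> \<noteq> 0\<close> by (simp add: is_min_poly_def map_poly_pCons)
  ultimately have "degree q \<le> degree r" using min unfolding is_min_poly_def by blast
  moreover have "degree q = Suc (degree r)" using qr \<open>r \<noteq> 0\<close> by simp
  ultimately show False by simp
qed

section \<open>The group G\<close>

lemma hat_apply:
  "hat n g w j k = (\<Sum>j'\<le>n. \<Sum>k'\<in>{j'<..n}. w j' k' * wedge n (\<lambda>i. g j' i) (\<lambda>i. g k' i) j k)"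
  by (simp add: hat_def sum_fun_apply scaleW_def)

lemma vmat_basis_vec:
  assumes "i \<le> n" "j \<le> n"
  shows "vmat n (basis_vec i) g j = (g i j :: 'a::comm_ring_1)"
proof -
  have "(\<Sum>l\<le>n. basis_vec i l * g l j) = (\<Sum>l\<le>n. if l = i then g i j else 0)"
    by (rule sum.cong) (auto simp: basis_vec_def)
  then show ?thesis using assms by (simp add: vmat_def sum.delta')
qed

lemma equivariance_U_coord:
  fixes g :: "nat \<Rightarrow> nat \<Rightarrow> 'a::comm_ring_1"
  assumes eq: "fmap n b c A (vmat n (basis_vec i) g) = hat n g (fmap n b c A (basis_vec i))"
    and i: "1 \<le> i" "i \<le> n" and jk: "1 \<le> j" "j < k" "k \<le> n"
  shows "g i 0 * c j k = (\<Sum>m\<in>{1..n}. A i m * (g 0 j * g m k - g 0 k * g m j))"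
proof -
  let ?w = "fmap n b c A (basis_vec i)"
  let ?F = "\<lambda>j'. \<Sum>k'\<in>{j'<..n}. ?w j' k' * wedge n (\<lambda>l. g j' l) (\<lambda>l. g k' l) j k"
  have v_i_f_U: "?w j' k' = 0" if "1 \<le> j'" "j' < k'" "k' \<le> n" for j' k'
    using that i by (simp add: fmap_U_coord basis_vec_def)
  have v_i_f_v0: "?w 0 m = A i m" if "1 \<le> m" "m \<le> n" for m
  proof -
    have "(\<Sum>i'\<in>{1..n}. basis_vec i i' * A i' m) = (\<Sum>i'\<in>{1..n}. if i' = i then A i m else 0)"
      by (rule sum.cong) (auto simp: basis_vec_def)
    then show ?thesis using that i by (simp add: fmap_v0_coord basis_vec_def sum.delta')
  qed
  have "g i 0 * c j k = fmap n b c A (vmat n (basis_vec i) g) j k"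
    using i jk by (simp add: fmap_U_coord vmat_basis_vec)
  also have "\<dots> = ?F 0 + (\<Sum>j'<n. ?F (Suc j'))"
    unfolding eq hat_apply by (rule sum.atMost_shift)
  also have "(\<Sum>j'<n. ?F (Suc j')) = 0"
    by (intro sum.neutral ballI) (simp add: v_i_f_U)
  also have "?F 0 = (\<Sum>m\<in>{1..n}. A i m * (g 0 j * g m k - g 0 k * g m j))"
    using jk by (auto intro!: sum.cong simp: greaterThanAtMost_eq_atLeastAtMost_diff
        v_i_f_v0 wedge_def)
  finally show ?thesis by simp
qed

(* Core of the theorem: for g satisfying the U-part equations for the companion matrix,
   the vector u = U-projection of v_0 g vanishes, hence so does the first column of g
   below g_{00}. *)
lemma first_column_vanishes:
  fixes g h :: "nat \<Rightarrow> nat \<Rightarrow> 'a::field" and c :: "nat \<Rightarrow> nat \<Rightarrow> 'a"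
  assumes n3: "n \<ge> 3" and c: "1 \<le> j0" "j0 < k0" "k0 \<le> n" "c j0 k0 \<noteq> 0"
    and q0: "coeff q 0 \<noteq> 0"
    and rows: "\<And>i j k. 1 \<le> i \<Longrightarrow> i \<le> n \<Longrightarrow> 1 \<le> j \<Longrightarrow> j < k \<Longrightarrow> k \<le> n \<Longrightarrow>
           g i 0 * c j k = (\<Sum>m\<in>{1..n}. companion n q i m * (g 0 j * g m k - g 0 k * g m j))"
    and inv: "\<And>p k. p \<le> n \<Longrightarrow> k \<le> n \<Longrightarrow> (\<Sum>l\<le>n. h p l * g l k) = (if p = k then 1 else 0)"
    and i: "1 \<le> i" "i \<le> n"
  shows "g i 0 = 0"
proof -
  define W where "W m j k = g 0 j * g m k - g 0 k * g m j" for m j k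
  have "\<exists>t. \<forall>j k. 1 \<le> j \<and> j < k \<and> k \<le> n \<longrightarrow> W m j k = t * c j k"
    if "1 \<le> m" "m \<le> n" for m
    by (rule companion_preimage_of_line[OF q0 _ that]) (use rows in \<open>simp add: W_def\<close>)
  then obtain t where t: "\<And>m j k. 1 \<le> m \<Longrightarrow> m \<le> n \<Longrightarrow> 1 \<le> j \<Longrightarrow> j < k \<Longrightarrow> k \<le> n \<Longrightarrow>
       W m j k = t m * c j k"
    by metis
  (* u /\ v_p = sum_l h_{pl} (u /\ w_l) lies on the line F c. *)
  define s where "s p = (\<Sum>l\<le>n. h p l * (if l = 0 then 0 else t l))" for p
  have line: "g 0 j * (if p = k then 1 else 0) - g 0 k * (if p = j then 1 else 0) = s p * c j k"
    if p: "1 \<le> p" "p \<le> n" and jk: "1 \<le> j" "j < k" "k \<le> n" for p j k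
  proof -
    have "g 0 j * (if p = k then 1 else 0) - g 0 k * (if p = j then 1 else 0)
        = g 0 j * (\<Sum>l\<le>n. h p l * g l k) - g 0 k * (\<Sum>l\<le>n. h p l * g l j)"
      using inv p jk by simp
    also have "\<dots> = (\<Sum>l\<le>n. h p l * W l j k)"
      unfolding W_def by (simp add: sum_distrib_left sum_subtractf algebra_simps)
    also have "\<dots> = (\<Sum>l\<le>n. h p l * (if l = 0 then 0 else t l) * c j k)"
      using t jk by (intro sum.cong refl) (auto simp: W_def)
    also have "\<dots> = s p * c j k" by (simp add: s_def sum_distrib_right)
    finally show ?thesis .
  qed
  have u0: "g 0 m = 0" if "1 \<le> m" "m \<le> n" for m
    using wedge_into_line_vanishes[OF n3 line that] by blast
  have "g i 0 * c j0 k0 = 0"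
    using rows[OF i c(1-3)] u0 c by simp
  then show ?thesis using c(4) by simp
qed

lemma vmat_image_Usp:
  fixes g h :: "nat \<Rightarrow> nat \<Rightarrow> 'a::field"
  assumes col: "\<And>i. 1 \<le> i \<Longrightarrow> i \<le> n \<Longrightarrow> g i 0 = 0"
    and inv: "\<And>i j. i \<le> n \<Longrightarrow> j \<le> n \<Longrightarrow> (\<Sum>l\<le>n. h i l * g l j) = (if i = j then 1 else 0)"
  shows "(\<lambda>x. vmat n x g) ` Usp n = Usp n"
proof -
  have v0: "vmat n u g 0 = u 0 * g 0 0" for u
  proof -
    have "(\<Sum>l\<le>n. u l * g l 0) = (\<Sum>l\<le>n. if l = 0 then u 0 * g 0 0 else 0)"
      using col by (intro sum.cong) auto
    then show ?thesis by (simp add: vmat_def)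
  qed
  have "(\<Sum>l\<le>n. h 0 l * g l 0) = (\<Sum>l\<le>n. if l = 0 then h 0 0 * g 0 0 else 0)"
    using col by (intro sum.cong) auto
  then have g00: "g 0 0 \<noteq> 0" using inv[of 0 0] by auto
  have vecs: "vmat n u m \<in> vecs n" for u and m :: "nat \<Rightarrow> nat \<Rightarrow> 'a"
    by (simp add: vmat_def vecs_def)
  have inverse_image: "vmat n (vmat n x h) g = x" if "x \<in> vecs n" for x
  proof
    fix j
    show "vmat n (vmat n x h) g j = x j"
    proof (cases "j \<le> n")
      case True
      have "vmat n (vmat n x h) g j = (\<Sum>i\<le>n. (\<Sum>l\<le>n. x l * h l i) * g i j)"
        using True by (simp add: vmat_def)
      also have "\<dots> = (\<Sum>l\<le>n. x l * (\<Sum>i\<le>n. h l i * g i j))"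
        by (simp add: sum_distrib_left sum_distrib_right mult.assoc) (rule sum.swap)
      also have "\<dots> = (\<Sum>l\<le>n. if l = j then x j else 0)"
        using inv True by (intro sum.cong) auto
      finally show ?thesis using True by simp
    qed (use that in \<open>simp add: vmat_def vecs_def\<close>)
  qed
  show ?thesis
  proof
    show "(\<lambda>x. vmat n x g) ` Usp n \<subseteq> Usp n"
      using v0 vecs by (auto simp: Usp_def)
  next
    show "Usp n \<subseteq> (\<lambda>x. vmat n x g) ` Usp n"
    proof
      fix x :: "nat \<Rightarrow> 'a" assume x: "x \<in> Usp n"
      then have x_eq: "vmat n (vmat n x h) g = x" by (simp add: Usp_def inverse_image)
      have "vmat n x h 0 * g 0 0 = 0"
        using x x_eq v0[of "vmat n x h"] by (simp add: Usp_def)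
      then have "vmat n x h \<in> Usp n" using g00 by (simp add: Usp_def vecs)
      then show "x \<in> (\<lambda>x. vmat n x g) ` Usp n"
        using x_eq by (metis image_eqI)
    qed
  qed
qed

theorem lemma3p2:
  fixes p n :: nat
    and b :: "nat \<Rightarrow> 'a::{field,finite}"
    and c :: "nat \<Rightarrow> nat \<Rightarrow> 'a"
    and \<phi> :: "'a \<Rightarrow> 'b::{field,finite}"
    and \<alpha> :: 'b
    and q :: "'a poly"
  assumes "prime p"
    and "card (UNIV :: 'a set) = p"
    and "card (UNIV :: 'b set) = p ^ n"
    and "n \<ge> 3"
    and "is_ring_hom \<phi>"
    and "is_primitive_elem \<alpha>"
    and "is_min_poly \<phi> \<alpha> q"
    and "\<exists>i\<in>{1..n}. b i \<noteq> 0"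
    and "\<exists>j k. 1 \<le> j \<and> j < k \<and> k \<le> n \<and> c j k \<noteq> 0"
  shows "Usp n = {x \<in> vecs n. fmap n b c (companion n q) x \<in> v0_wedge_V n}
    \<and> (\<forall>g\<in>Ggrp n b c (companion n q). (\<lambda>x. vmat n x g) ` Usp n = Usp n)"
proof -
  obtain j0 k0 where c: "1 \<le> j0" "j0 < k0" "k0 \<le> n" "c j0 k0 \<noteq> 0" using assms(9) by blast
  have q0: "coeff q 0 \<noteq> 0"
    using min_poly_coeff_0_nonzero assms(5-7) unfolding is_primitive_elem_def by blast
  have "(\<lambda>x. vmat n x g) ` Usp n = Usp n" if g: "g \<in> Ggrp n b c (companion n q)" for g
  proof -
    obtain h where "\<forall>i\<le>n. \<forall>j\<le>n. (\<Sum>l\<le>n. g i l * h l j) = (if i = j then 1 else 0)"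
      using g unfolding Ggrp_def is_GL_def by auto
    then have inv: "\<forall>i\<le>n. \<forall>j\<le>n. (\<Sum>l\<le>n. h i l * g l j) = (if i = j then 1 else 0)"
      by (rule right_inverse_imp_left_inverse)
    have equiv: "fmap n b c (companion n q) (vmat n v g) = hat n g (fmap n b c (companion n q) v)"
      if "v \<in> vecs n" for v
      using g that unfolding Ggrp_def by auto
    have rows: "g i 0 * c j k = (\<Sum>m\<in>{1..n}. companion n q i m * (g 0 j * g m k - g 0 k * g m j))"
      if "1 \<le> i" "i \<le> n" "1 \<le> j" "j < k" "k \<le> n" for i j k
      using that by (intro equivariance_U_coord[where b = b] equiv) (simp_all add: vecs_def basis_vec_def)
    have col: "g i 0 = 0" if "1 \<le> i" "i \<le> n" for i
      by (rule first_column_vanishes[where c = c and h = h, OF assms(4) c q0]) (use rows inv that in auto)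
    show ?thesis
      by (rule vmat_image_Usp[where h = h]) (use col inv in auto)
  qed
  then show ?thesis
    using fmap_in_v0_wedge_V_iff[where c = c, OF c] by (auto simp: Usp_def)
qed

end
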